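(* For every $k\in\mathbb{N}$, $\mathcal{L}^{(k)}_0$ is a functional Banach space on $T$ containing $\mathcal{P}$ and satisfying: (a) $\mathcal{P}$ is dense in $\mathcal{L}^{(k)}_0$; (b) for each $v\in T$ and each $f\in\mathcal{L}^{(k)}_0$, $p_vf\in\mathcal{L}^{(k)}_0$.
   Context: $T$ is a tree (locally finite, connected, simply connected graph, identified with its vertex set) without terminal vertices, rooted at $o$. $|v|$ is the distance from $o$ to $v$; for $v\ne o$, $v^-$ is the parent of $v$. $T^*=T\setminus\{o\}$, $Df(v)=|f(v)-f(v^-)|$. For $x\ge1$: $\ell_0(x)=1$, $\ell_1(x)=1+\ln x$, $\ell_j(x)=1+\ln\ell_{j-1}(x)$ for $j\ge2$. $\mathcal{L}^{(k)}$ is the space of $f:T\to\mathbb{C}$ with $\sup_{v\in T^*}|v|\prod_{j=0}^{k-1}\ell_j(|v|)Df(v)<\infty$, normed by $\|f\|_k=|f(o)|+\sup_{v\in T^*}|v|\prod_{j=0}^{k-1}\ell_j(|v|)Df(v)$; $\mathcal{L}^{(k)}_0$ is its subspace of $f$ with $\lim_{|v|\to\infty}|v|\prod_{j=0}^{k-1}\ell_j(|v|)Df(v)=0$. A functional Banach space on $T$ is a Banach space of complex functions on $T$ on which every point evaluation $f\mapsto f(v)$ is bounded. For $v\in T$, $S_v$ is the set of $v$ and all its descendants, $p_v=\chi_{S_v}$, and $\mathcal{P}$ is the set of all finite linear combinations $\sum_{i=1}^N a_ip_{v_i}$ with $a_i\in\mathbb{C}$, $v_i\in T$. *)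

theory Defs
  imports Complex_Main
begin

text \<open>A rooted tree on the vertex type 'v (vertex set = UNIV), given by its root r and
  the parent map par (par r is irrelevant).  Edges are the pairs {w, par w}, w \<noteq> r.
  Conditions: connected and simply connected (every vertex reaches the root by iterating
  the parent map), locally finite (finitely many children), no terminal vertices
  (every non-root vertex has a child; the root has at least two children).\<close>

definition children :: "'v \<Rightarrow> ('v \<Rightarrow> 'v) \<Rightarrow> 'v \<Rightarrow> 'v set" where
  "children r par v = {w. w \<noteq> r \<and> par w = v}"

definition rooted_tree :: "'v \<Rightarrow> ('v \<Rightarrow> 'v) \<Rightarrow> bool" where
  "rooted_tree r par \<longleftrightarrow>
     (\<forall>v. \<exists>n. (par ^^ n) v = r) \<and>
     (\<forall>v. finite (children r par v)) \<and>
     (\<forall>v. v \<noteq> r \<longrightarrow> children r par v \<noteq> {}) \<and>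
     2 \<le> card (children r par r)"

definition vlen :: "'v \<Rightarrow> ('v \<Rightarrow> 'v) \<Rightarrow> 'v \<Rightarrow> nat" where
  "vlen r par v = (LEAST n. (par ^^ n) v = r)"

definition sector :: "'v \<Rightarrow> ('v \<Rightarrow> 'v) \<Rightarrow> 'v \<Rightarrow> 'v set" where
  "sector r par v = {w. \<exists>n \<le> vlen r par w. (par ^^ n) w = v}"

definition pfun :: "'v \<Rightarrow> ('v \<Rightarrow> 'v) \<Rightarrow> 'v \<Rightarrow> 'v \<Rightarrow> complex" where
  "pfun r par v = (\<lambda>w. if w \<in> sector r par v then 1 else 0)"

definition Pspace :: "'v \<Rightarrow> ('v \<Rightarrow> 'v) \<Rightarrow> ('v \<Rightarrow> complex) set" where
  "Pspace r par = {f. \<exists>(N::nat) (a::nat \<Rightarrow> complex) (vs::nat \<Rightarrow> 'v).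
                        f = (\<lambda>w. \<Sum>i<N. a i * pfun r par (vs i) w)}"

fun ell :: "nat \<Rightarrow> real \<Rightarrow> real" where
  "ell 0 x = 1"
| "ell (Suc 0) x = 1 + ln x"
| "ell (Suc (Suc j)) x = 1 + ln (ell (Suc j) x)"

definition weight :: "nat \<Rightarrow> nat \<Rightarrow> real" where
  "weight k n = real n * (\<Prod>j<k. ell j (real n))"

definition Df :: "'v \<Rightarrow> ('v \<Rightarrow> 'v) \<Rightarrow> ('v \<Rightarrow> complex) \<Rightarrow> 'v \<Rightarrow> real" where
  "Df r par f v = cmod (f v - f (par v))"

definition wDf :: "nat \<Rightarrow> 'v \<Rightarrow> ('v \<Rightarrow> 'v) \<Rightarrow> ('v \<Rightarrow> complex) \<Rightarrow> 'v \<Rightarrow> real" where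
  "wDf k r par f v = weight k (vlen r par v) * Df r par f v"

definition Lk :: "nat \<Rightarrow> 'v \<Rightarrow> ('v \<Rightarrow> 'v) \<Rightarrow> ('v \<Rightarrow> complex) set" where
  "Lk k r par = {f. \<exists>C. \<forall>v. v \<noteq> r \<longrightarrow> wDf k r par f v \<le> C}"

definition normk :: "nat \<Rightarrow> 'v \<Rightarrow> ('v \<Rightarrow> 'v) \<Rightarrow> ('v \<Rightarrow> complex) \<Rightarrow> real" where
  "normk k r par f = cmod (f r) + (SUP v\<in>{v. v \<noteq> r}. wDf k r par f v)"

definition L0k :: "nat \<Rightarrow> 'v \<Rightarrow> ('v \<Rightarrow> 'v) \<Rightarrow> ('v \<Rightarrow> complex) set" where
  "L0k k r par = {f \<in> Lk k r par.
      \<forall>\<epsilon>>0. \<exists>N. \<forall>v. v \<noteq> r \<and> N \<le> vlen r par v \<longrightarrow> wDf k r par f v < \<epsilon>}"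

definition functional_banach :: "('v \<Rightarrow> complex) set \<Rightarrow> (('v \<Rightarrow> complex) \<Rightarrow> real) \<Rightarrow> bool" where
  "functional_banach X N \<longleftrightarrow>
     (\<lambda>_. 0) \<in> X \<and>
     (\<forall>f\<in>X. \<forall>g\<in>X. (\<lambda>w. f w + g w) \<in> X) \<and>
     (\<forall>c. \<forall>f\<in>X. (\<lambda>w. c * f w) \<in> X) \<and>
     (\<forall>f\<in>X. 0 \<le> N f) \<and>
     (\<forall>f\<in>X. N f = 0 \<longleftrightarrow> f = (\<lambda>_. 0)) \<and>
     (\<forall>c. \<forall>f\<in>X. N (\<lambda>w. c * f w) = cmod c * N f) \<and>
     (\<forall>f\<in>X. \<forall>g\<in>X. N (\<lambda>w. f w + g w) \<le> N f + N g) \<and>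
     (\<forall>s. (\<forall>n. s n \<in> X) \<longrightarrow>
          (\<forall>\<epsilon>>0. \<exists>M. \<forall>m\<ge>M. \<forall>n\<ge>M. N (\<lambda>w. s m w - s n w) < \<epsilon>) \<longrightarrow>
          (\<exists>g\<in>X. (\<lambda>n. N (\<lambda>w. s n w - g w)) \<longlonglongrightarrow> 0)) \<and>
     (\<forall>v. \<exists>C. \<forall>f\<in>X. cmod (f v) \<le> C * N f)"

end

theory Submission
  imports Defs
begin

text \<open>
  All weights are at least 1, so summing increments along the path from the root gives
  \<open>|f v| \<le> (1 + |v|) * \<parallel>f\<parallel>\<close>: point evaluations are bounded and a Cauchy sequence converges
  pointwise. The norm, a supremum of the quantities \<open>|f r| + wDf f v\<close>, is lower semicontinuous
  under pointwise convergence, which upgrades pointwise to norm convergence; a uniform limit of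
  functions whose weighted increments vanish at the boundary inherits this decay.
  Since the increments of \<open>pfun r par u\<close> form the indicator of \<open>u\<close>, every function is formally
  \<open>f r * pfun r par r + (\<Sum>u\<noteq>r. (f u - f (par u)) * pfun r par u)\<close>; truncating this expansion to a
  ball changes only the increments outside the ball, which are small for \<open>f\<close> in the little space.
  Multiplication by \<open>pfun r par v\<close> alters the increment at \<open>v\<close> and damps all others.
\<close>

lemma ell_ge_1: "1 \<le> x \<Longrightarrow> 1 \<le> ell j x"
  by (induction j x rule: ell.induct) auto

lemma weight_ge_1:
  assumes "1 \<le> n"
  shows "1 \<le> weight k n"
proof -
  have "1 \<le> (\<Prod>j<k. ell j (real n))"
    using assms by (intro prod_ge_1) (auto intro: ell_ge_1)
  with assms show ?thesis
    unfolding weight_def by (metis mult_mono' mult_1 of_nat_1 of_nat_le_iff zero_le_one)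
qed

lemma weight_nonneg: "0 \<le> weight k n"
  using weight_ge_1[of n k] by (cases "n = 0") (auto simp: weight_def)

lemma wDf_nonneg: "0 \<le> wDf k r par f v"
  by (simp add: wDf_def Df_def weight_nonneg)

lemma wDf_add: "wDf k r par (\<lambda>w. f w + g w) v \<le> wDf k r par f v + wDf k r par g v"
proof -
  have "cmod (f v + g v - (f (par v) + g (par v))) \<le> cmod (f v - f (par v)) + cmod (g v - g (par v))"
    by (metis add_diff_add norm_triangle_ineq)
  then show ?thesis
    unfolding wDf_def Df_def distrib_left[symmetric] by (intro mult_left_mono weight_nonneg)
qed

lemma wDf_diff: "wDf k r par (\<lambda>w. f w - g w) v \<le> wDf k r par f v + wDf k r par g v"
proof -
  have "f v - g v - (f (par v) - g (par v)) = (f v - f (par v)) - (g v - g (par v))"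
    by simp
  then have "cmod (f v - g v - (f (par v) - g (par v))) \<le> cmod (f v - f (par v)) + cmod (g v - g (par v))"
    by (metis norm_triangle_ineq4)
  then show ?thesis
    unfolding wDf_def Df_def distrib_left[symmetric] by (intro mult_left_mono weight_nonneg)
qed

lemma wDf_scale: "wDf k r par (\<lambda>w. c * f w) v = cmod c * wDf k r par f v"
  by (simp add: wDf_def Df_def norm_mult flip: right_diff_distrib)

lemma vlen_root [simp]: "vlen r par r = 0"
  unfolding vlen_def by (rule Least_equality) auto

definition at_boundary :: "'v \<Rightarrow> ('v \<Rightarrow> 'v) \<Rightarrow> 'v filter" where
  "at_boundary r par = filtercomap (vlen r par) at_top"

lemma eventually_at_boundary:
  "eventually P (at_boundary r par) \<longleftrightarrow> (\<exists>N. \<forall>v. N \<le> vlen r par v \<longrightarrow> P v)"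
  by (simp add: at_boundary_def eventually_filtercomap_at_top_linorder)

lemma eventually_at_boundary_ne: "\<forall>\<^sub>F w in at_boundary r par. w \<noteq> v"
  unfolding eventually_at_boundary by (metis Suc_n_not_le_n)

lemma wDf_tendsto_0_iff:
  "(wDf k r par f \<longlongrightarrow> 0) (at_boundary r par) \<longleftrightarrow>
     (\<forall>\<epsilon>>0. \<exists>N. \<forall>v. v \<noteq> r \<and> N \<le> vlen r par v \<longrightarrow> wDf k r par f v < \<epsilon>)"
proof -
  \<comment> \<open>Raising \<open>N\<close> to \<open>Suc N\<close> excludes the root, since \<open>vlen r par r = 0\<close>.\<close>
  have "(\<exists>N. \<forall>v. N \<le> vlen r par v \<longrightarrow> P v) \<longleftrightarrow> (\<exists>N. \<forall>v. v \<noteq> r \<and> N \<le> vlen r par v \<longrightarrow> P v)" for P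
    by (metis Suc_n_not_le_n le_trans vlen_root le_SucI)
  then show ?thesis
    by (simp add: tendsto_iff eventually_at_boundary dist_real_def wDf_nonneg)
qed

lemma Lk_scale: "f \<in> Lk k r par \<Longrightarrow> (\<lambda>w. c * f w) \<in> Lk k r par"
  unfolding Lk_def by (force simp: wDf_scale intro: mult_left_mono)

lemma normk_ge:
  assumes "f \<in> Lk k r par" and "v \<noteq> r"
  shows "cmod (f r) + wDf k r par f v \<le> normk k r par f"
proof -
  from assms(1) obtain C where "\<forall>v. v \<noteq> r \<longrightarrow> wDf k r par f v \<le> C"
    by (auto simp: Lk_def)
  then have "bdd_above (wDf k r par f ` {v. v \<noteq> r})"
    by (auto intro: bdd_aboveI2)
  with assms(2) show ?thesis
    unfolding normk_def by (simp add: cSUP_upper)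
qed

lemma bound_pointwise_limit:
  assumes lim: "\<And>w. (\<lambda>n. h n w) \<longlonglongrightarrow> h' w"
    and bound: "\<forall>\<^sub>F n in sequentially. h n \<in> Lk k r par \<and> normk k r par (h n) \<le> e"
    and v: "v \<noteq> r"
  shows "cmod (h' r) + wDf k r par h' v \<le> e"
proof (rule tendsto_upperbound)
  show "(\<lambda>n. cmod (h n r) + wDf k r par (h n) v) \<longlonglongrightarrow> cmod (h' r) + wDf k r par h' v"
    unfolding wDf_def Df_def by (intro tendsto_intros lim)
  show "\<forall>\<^sub>F n in sequentially. cmod (h n r) + wDf k r par (h n) v \<le> e"
    using bound by eventually_elim (use normk_ge v in force)
qed simp

section \<open>The tree\<close>

lemma pfun_root: "pfun r par v r = (if v = r then 1 else 0)"
  by (auto simp: pfun_def sector_def)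

locale rooted =
  fixes r :: 'v and par :: "'v \<Rightarrow> 'v"
  assumes rooted_tree: "rooted_tree r par"
begin

lemma funpow_vlen: "(par ^^ vlen r par v) v = r"
proof -
  have "\<exists>n. (par ^^ n) v = r"
    using rooted_tree by (auto simp: rooted_tree_def)
  then show ?thesis
    unfolding vlen_def by (rule LeastI_ex)
qed

lemma vlen_eq_0_iff: "vlen r par v = 0 \<longleftrightarrow> v = r"
  using funpow_vlen[of v] by auto

lemma vlen_parent:
  assumes "v \<noteq> r"
  shows "vlen r par v = Suc (vlen r par (par v))"
proof -
  obtain m where m: "vlen r par v = Suc m"
    using assms vlen_eq_0_iff not0_implies_Suc by blast
  have "vlen r par (par v) = m"
    unfolding vlen_def
  proof (rule Least_equality)
    show "(par ^^ m) (par v) = r"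
      using funpow_vlen[of v] m by (simp add: funpow_Suc_right del: funpow.simps)
  next
    fix n assume "(par ^^ n) (par v) = r"
    then have "vlen r par v \<le> Suc n"
      unfolding vlen_def by (intro Least_le) (simp add: funpow_Suc_right del: funpow.simps)
    with m show "m \<le> n"
      by simp
  qed
  with m show ?thesis
    by simp
qed

lemma vlen_funpow: "n \<le> vlen r par v \<Longrightarrow> vlen r par ((par ^^ n) v) = vlen r par v - n"
proof (induction n)
  case (Suc n)
  then have "(par ^^ n) v \<noteq> r"
    using vlen_eq_0_iff by fastforce
  with Suc show ?case
    using vlen_parent by simp
qed simp

lemma vlen_le_of_mem_sector: "w \<in> sector r par v \<Longrightarrow> vlen r par v \<le> vlen r par w"
  unfolding sector_def using vlen_funpow by auto

lemma mem_sector_iff_parent: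
  assumes "w \<noteq> r"
  shows "w \<in> sector r par v \<longleftrightarrow> w = v \<or> par w \<in> sector r par v"
proof -
  have "(\<exists>n\<le>Suc m. P n) \<longleftrightarrow> P 0 \<or> (\<exists>n\<le>m. P (Suc n))" for m and P :: "nat \<Rightarrow> bool"
    by (metis Suc_le_mono gr0I gr0_conv_Suc le0)
  then show ?thesis
    by (simp add: sector_def vlen_parent[OF assms] funpow_Suc_right del: funpow.simps)
qed

lemma pfun_increment:
  assumes "w \<noteq> r"
  shows "pfun r par v w - pfun r par v (par w) = (if w = v then 1 else 0)"
proof (cases "w = v")
  case True
  have "par w \<notin> sector r par v"
    using vlen_le_of_mem_sector vlen_parent[OF assms] True by fastforce
  moreover have "w \<in> sector r par v"
    using mem_sector_iff_parent[OF assms] True by blast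
  ultimately show ?thesis
    using True by (simp add: pfun_def)
next
  case False
  then show ?thesis
    using mem_sector_iff_parent[OF assms] by (simp add: pfun_def)
qed

lemma sum_pfun_increment:
  assumes "finite U" and "w \<noteq> r"
  shows "(\<Sum>u\<in>U. c u * pfun r par u w) - (\<Sum>u\<in>U. c u * pfun r par u (par w)) = (if w \<in> U then c w else 0)"
proof -
  have "(\<Sum>u\<in>U. c u * pfun r par u w) - (\<Sum>u\<in>U. c u * pfun r par u (par w))
      = (\<Sum>u\<in>U. c u * (pfun r par u w - pfun r par u (par w)))"
    by (simp add: sum_subtractf right_diff_distrib)
  also have "\<dots> = (\<Sum>u\<in>U. if u = w then c u else 0)"
    by (rule sum.cong) (auto simp: pfun_increment[OF assms(2)])
  also have "\<dots> = (if w \<in> U then c w else 0)"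
    using assms(1) by simp
  finally show ?thesis .
qed

lemma sum_pfun_root:
  assumes "finite U" and "r \<in> U"
  shows "(\<Sum>u\<in>U. c u * pfun r par u r) = c r"
  using assms by (simp add: pfun_root if_distrib[of "times _"] cong: if_cong)

lemma finite_vlen_le: "finite {w. vlen r par w \<le> N}"
proof (induction N)
  case 0
  then show ?case
    using vlen_eq_0_iff by simp
next
  case (Suc N)
  have "{w. vlen r par w \<le> Suc N} \<subseteq> {w. vlen r par w \<le> N} \<union> (\<Union>u\<in>{w. vlen r par w \<le> N}. children r par u)"
  proof
    fix w assume "w \<in> {w. vlen r par w \<le> Suc N}"
    then show "w \<in> {w. vlen r par w \<le> N} \<union> (\<Union>u\<in>{w. vlen r par w \<le> N}. children r par u)"
      using vlen_parent[of w] by (cases "w = r") (auto simp: children_def)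
  qed
  moreover have "finite (children r par u)" for u
    using rooted_tree by (simp add: rooted_tree_def)
  ultimately show ?case
    using Suc.IH by (meson finite_UN_I finite_UnI finite_subset)
qed

lemma exists_nonroot: "\<exists>v. v \<noteq> r"
proof -
  have "children r par r \<noteq> {}"
    using rooted_tree by (auto simp: rooted_tree_def)
  then show ?thesis
    by (auto simp: children_def)
qed

end

context rooted
begin

lemma normk_le:
  assumes "\<And>v. v \<noteq> r \<Longrightarrow> cmod (f r) + wDf k r par f v \<le> C"
  shows "normk k r par f \<le> C"
proof -
  have "(SUP v\<in>{v. v \<noteq> r}. wDf k r par f v) \<le> C - cmod (f r)"
    using exists_nonroot assms by (intro cSUP_least) (auto simp: algebra_simps)
  then show ?thesis
    by (simp add: normk_def)
qed

lemma normk_ge_root: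
  assumes "f \<in> Lk k r par"
  shows "cmod (f r) \<le> normk k r par f"
proof -
  obtain v where "v \<noteq> r"
    using exists_nonroot by blast
  with normk_ge[OF assms this] wDf_nonneg[of k r par f v] show ?thesis
    by linarith
qed

lemma normk_nonneg: "f \<in> Lk k r par \<Longrightarrow> 0 \<le> normk k r par f"
  using normk_ge_root norm_ge_zero order_trans by blast

lemma Df_le_normk:
  assumes "f \<in> Lk k r par" and "v \<noteq> r"
  shows "Df r par f v \<le> normk k r par f"
proof -
  have "vlen r par v \<noteq> 0"
    using assms(2) vlen_eq_0_iff by simp
  then have "1 \<le> weight k (vlen r par v)"
    by (intro weight_ge_1) simp
  then have "Df r par f v \<le> wDf k r par f v"
    unfolding wDf_def by (metis Df_def mult_1 mult_right_mono norm_ge_zero)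
  with normk_ge[OF assms] norm_ge_zero[of "f r"] show ?thesis
    by linarith
qed

lemma norm_eval_le:
  assumes "f \<in> Lk k r par"
  shows "cmod (f v) \<le> (1 + real (vlen r par v)) * normk k r par f"
proof (induction "vlen r par v" arbitrary: v)
  case 0
  then show ?case
    using normk_ge_root[OF assms] vlen_eq_0_iff by simp
next
  case (Suc n)
  then have v: "v \<noteq> r"
    using vlen_eq_0_iff by force
  with Suc.hyps(2) have n: "n = vlen r par (par v)"
    using vlen_parent by simp
  have "cmod (f v) \<le> cmod (f (par v)) + Df r par f v"
    unfolding Df_def by (metis add.commute diff_add_cancel norm_triangle_ineq)
  also have "\<dots> \<le> (1 + real n) * normk k r par f + normk k r par f"
    using Suc.hyps(1)[OF n] Df_le_normk[OF assms v] n by simp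
  finally show ?case
    by (simp add: Suc.hyps(2)[symmetric] algebra_simps)
qed

lemma normk_zero: "normk k r par (\<lambda>_. 0) = 0"
proof (rule antisym)
  show "normk k r par (\<lambda>_. 0) \<le> 0"
    by (rule normk_le) (simp add: wDf_def Df_def)
  show "0 \<le> normk k r par (\<lambda>_. 0)"
    by (rule normk_nonneg) (auto simp: Lk_def wDf_def Df_def intro: exI[of _ 0])
qed

lemma normk_eq_0_iff:
  assumes "f \<in> Lk k r par"
  shows "normk k r par f = 0 \<longleftrightarrow> f = (\<lambda>_. 0)"
proof
  assume "normk k r par f = 0"
  then show "f = (\<lambda>_. 0)"
    using norm_eval_le[OF assms] by (intro ext) (metis mult_zero_right norm_le_zero_iff)
qed (simp add: normk_zero)

lemma normk_triangle:
  assumes "f \<in> Lk k r par" and "g \<in> Lk k r par"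
  shows "normk k r par (\<lambda>w. f w + g w) \<le> normk k r par f + normk k r par g"
proof (rule normk_le)
  fix v assume v: "v \<noteq> r"
  have "cmod (f r + g r) + wDf k r par (\<lambda>w. f w + g w) v
      \<le> (cmod (f r) + wDf k r par f v) + (cmod (g r) + wDf k r par g v)"
    using norm_triangle_ineq[of "f r" "g r"] wDf_add[of k r par f g v] by simp
  also have "\<dots> \<le> normk k r par f + normk k r par g"
    using normk_ge[OF assms(1) v] normk_ge[OF assms(2) v] by simp
  finally show "cmod (f r + g r) + wDf k r par (\<lambda>w. f w + g w) v \<le> normk k r par f + normk k r par g" .
qed

lemma normk_scale_le:
  assumes "f \<in> Lk k r par"
  shows "normk k r par (\<lambda>w. c * f w) \<le> cmod c * normk k r par f"
proof (rule normk_le)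
  fix v assume "v \<noteq> r"
  then have "cmod c * (cmod (f r) + wDf k r par f v) \<le> cmod c * normk k r par f"
    using normk_ge[OF assms] by (simp add: mult_left_mono)
  then show "cmod (c * f r) + wDf k r par (\<lambda>w. c * f w) v \<le> cmod c * normk k r par f"
    by (simp add: wDf_scale norm_mult algebra_simps)
qed

lemma normk_scale:
  assumes "f \<in> Lk k r par"
  shows "normk k r par (\<lambda>w. c * f w) = cmod c * normk k r par f"
proof (cases "c = 0")
  case True
  then show ?thesis
    using normk_zero by simp
next
  case False
  have "(\<lambda>w. inverse c * (c * f w)) = f"
    using False by (simp add: field_simps)
  then have "normk k r par f \<le> cmod (inverse c) * normk k r par (\<lambda>w. c * f w)"
    using normk_scale_le[OF Lk_scale[OF assms, of c], of "inverse c"] by simp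
  then have "cmod c * normk k r par f \<le> cmod c * (cmod (inverse c) * normk k r par (\<lambda>w. c * f w))"
    by (simp add: mult_left_mono)
  also have "\<dots> = normk k r par (\<lambda>w. c * f w)"
    using False by (simp add: norm_inverse)
  finally have "cmod c * normk k r par f \<le> normk k r par (\<lambda>w. c * f w)" .
  with normk_scale_le[OF assms, of c] show ?thesis
    by simp
qed

end

section \<open>The little space\<close>

lemma L0k_imp_Lk: "f \<in> L0k k r par \<Longrightarrow> f \<in> Lk k r par"
  by (simp add: L0k_def)

context rooted
begin

lemma Lk_if_wDf_tendsto_0:
  assumes "(wDf k r par f \<longlongrightarrow> 0) (at_boundary r par)"
  shows "f \<in> Lk k r par"
proof -
  have "\<forall>\<^sub>F v in at_boundary r par. wDf k r par f v < 1"
    using order_tendstoD(2)[OF assms] by simp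
  then obtain N where N: "\<And>v. N \<le> vlen r par v \<Longrightarrow> wDf k r par f v < 1"
    unfolding eventually_at_boundary by blast
  have "wDf k r par f v \<le> 1 + (\<Sum>w\<in>{w. vlen r par w \<le> N}. wDf k r par f w)" for v
  proof (cases "N \<le> vlen r par v")
    case True
    have "0 \<le> (\<Sum>w\<in>{w. vlen r par w \<le> N}. wDf k r par f w)"
      by (intro sum_nonneg wDf_nonneg)
    with N[OF True] show ?thesis
      by linarith
  next
    case False
    then have "wDf k r par f v \<le> (\<Sum>w\<in>{w. vlen r par w \<le> N}. wDf k r par f w)"
      by (intro member_le_sum finite_vlen_le wDf_nonneg) simp_all
    then show ?thesis
      by simp
  qed
  then show ?thesis
    unfolding Lk_def by blast
qed

lemma L0k_iff_wDf_tendsto_0: "f \<in> L0k k r par \<longleftrightarrow> (wDf k r par f \<longlongrightarrow> 0) (at_boundary r par)"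
  using Lk_if_wDf_tendsto_0 by (auto simp: L0k_def wDf_tendsto_0_iff)

lemma L0k_dominated:
  assumes "\<forall>\<^sub>F v in at_boundary r par. wDf k r par g v \<le> B v"
    and "(B \<longlongrightarrow> 0) (at_boundary r par)"
  shows "g \<in> L0k k r par"
  unfolding L0k_iff_wDf_tendsto_0
  by (rule tendsto_sandwich[OF _ assms(1) tendsto_const assms(2)]) (simp add: wDf_nonneg)

lemma L0k_const: "(\<lambda>_. c) \<in> L0k k r par"
  by (rule L0k_dominated[where B = "\<lambda>_. 0"]) (simp_all add: wDf_def Df_def)

lemma L0k_add: "f \<in> L0k k r par \<Longrightarrow> g \<in> L0k k r par \<Longrightarrow> (\<lambda>w. f w + g w) \<in> L0k k r par"
  by (rule L0k_dominated[OF always_eventually[OF allI[OF wDf_add]]])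
    (simp add: L0k_iff_wDf_tendsto_0 tendsto_add_zero)

lemma L0k_diff: "f \<in> L0k k r par \<Longrightarrow> g \<in> L0k k r par \<Longrightarrow> (\<lambda>w. f w - g w) \<in> L0k k r par"
  by (rule L0k_dominated[OF always_eventually[OF allI[OF wDf_diff]]])
    (simp add: L0k_iff_wDf_tendsto_0 tendsto_add_zero)

lemma L0k_scale: "f \<in> L0k k r par \<Longrightarrow> (\<lambda>w. c * f w) \<in> L0k k r par"
  by (rule L0k_dominated[where B = "\<lambda>v. cmod c * wDf k r par f v"])
    (simp_all add: wDf_scale L0k_iff_wDf_tendsto_0 tendsto_mult_right_zero)

lemma L0k_sum: "(\<And>i. i \<in> I \<Longrightarrow> f i \<in> L0k k r par) \<Longrightarrow> (\<lambda>w. \<Sum>i\<in>I. f i w) \<in> L0k k r par"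
proof (induction I rule: infinite_finite_induct)
  case (insert i I)
  then show ?case
    using L0k_add[where f = "f i" and g = "\<lambda>w. \<Sum>i\<in>I. f i w"] by simp
qed (simp_all add: L0k_const)

lemma L0k_closed:
  assumes "\<And>\<epsilon>. 0 < \<epsilon> \<Longrightarrow> \<exists>h\<in>L0k k r par. \<forall>v. v \<noteq> r \<longrightarrow> wDf k r par (\<lambda>w. h w - g w) v \<le> \<epsilon>"
  shows "g \<in> L0k k r par"
  unfolding L0k_iff_wDf_tendsto_0
proof (rule order_tendstoI)
  fix a :: real assume "a < 0"
  then show "\<forall>\<^sub>F v in at_boundary r par. a < wDf k r par g v"
    using wDf_nonneg[of k r par g] by (intro always_eventually allI) (meson less_le_trans)
next
  fix \<epsilon> :: real assume "0 < \<epsilon>"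
  then obtain h where h: "h \<in> L0k k r par"
    and close: "\<And>v. v \<noteq> r \<Longrightarrow> wDf k r par (\<lambda>w. h w - g w) v \<le> \<epsilon> / 2"
    using assms[of "\<epsilon> / 2"] by auto
  have "\<forall>\<^sub>F v in at_boundary r par. wDf k r par h v < \<epsilon> / 2"
    using h \<open>0 < \<epsilon>\<close> by (intro order_tendstoD(2)) (auto simp: L0k_iff_wDf_tendsto_0)
  then show "\<forall>\<^sub>F v in at_boundary r par. wDf k r par g v < \<epsilon>"
    using eventually_at_boundary_ne[where v = r]
  proof eventually_elim
    case (elim v)
    have "wDf k r par g v \<le> wDf k r par h v + wDf k r par (\<lambda>w. h w - g w) v"
      using wDf_diff[of k r par h "\<lambda>w. h w - g w" v] by simp
    with close[OF elim(2)] elim(1) show ?case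
      by linarith
  qed
qed

lemma pfun_mult_in_L0k:
  assumes "f \<in> L0k k r par"
  shows "(\<lambda>w. pfun r par v w * f w) \<in> L0k k r par"
proof (rule L0k_dominated)
  \<comment> \<open>Away from \<open>v\<close> the factor \<open>pfun r par v\<close> is constant along edges, so it only damps the increments.\<close>
  show "\<forall>\<^sub>F w in at_boundary r par. wDf k r par (\<lambda>w. pfun r par v w * f w) w \<le> wDf k r par f w"
    using eventually_at_boundary_ne[where v = r] eventually_at_boundary_ne[where v = v]
  proof eventually_elim
    case (elim w)
    then have "pfun r par v (par w) = pfun r par v w"
      using pfun_increment[of w v] by simp
    then have "Df r par (\<lambda>w. pfun r par v w * f w) w = cmod (pfun r par v w) * Df r par f w"
      by (simp add: Df_def norm_mult flip: right_diff_distrib)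
    also have "\<dots> \<le> Df r par f w"
      by (simp add: pfun_def Df_def)
    finally show ?case
      unfolding wDf_def by (intro mult_left_mono weight_nonneg)
  qed
  show "(wDf k r par f \<longlongrightarrow> 0) (at_boundary r par)"
    using assms by (simp add: L0k_iff_wDf_tendsto_0)
qed

lemma Pspace_subset_L0k: "Pspace r par \<subseteq> L0k k r par"
proof
  fix p assume "p \<in> Pspace r par"
  then obtain N :: nat and a :: "nat \<Rightarrow> complex" and vs where p: "p = (\<lambda>w. \<Sum>i<N. a i * pfun r par (vs i) w)"
    unfolding Pspace_def mem_Collect_eq by (elim exE) (rule that)
  have "pfun r par v \<in> L0k k r par" for v
    using pfun_mult_in_L0k[OF L0k_const[of 1]] by simp
  then show "p \<in> L0k k r par"
    unfolding p by (intro L0k_sum L0k_scale)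
qed

end

section \<open>Density and completeness\<close>

lemma Pspace_sum:
  assumes "finite U"
  shows "(\<lambda>w. \<Sum>u\<in>U. c u * pfun r par u w) \<in> Pspace r par"
proof -
  obtain h where h: "bij_betw h {0..<card U} U"
    using ex_bij_betw_nat_finite[OF assms] by blast
  have "(\<Sum>u\<in>U. c u * pfun r par u w) = (\<Sum>i<card U. c (h i) * pfun r par (h i) w)" for w
    using sum.reindex_bij_betw[OF h, symmetric] by (simp add: atLeast0LessThan)
  then show ?thesis
    unfolding Pspace_def mem_Collect_eq
    by (intro exI[of _ "card U"] exI[of _ "\<lambda>i. c (h i)"] exI[of _ h]) simp
qed

context rooted
begin

lemma Pspace_dense:
  assumes f: "f \<in> L0k k r par" and "0 < \<epsilon>"
  shows "\<exists>p\<in>Pspace r par. normk k r par (\<lambda>w. f w - p w) < \<epsilon>"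
proof -
  have "\<forall>\<^sub>F v in at_boundary r par. wDf k r par f v < \<epsilon> / 2"
    using f \<open>0 < \<epsilon>\<close> by (intro order_tendstoD(2)) (auto simp: L0k_iff_wDf_tendsto_0)
  then obtain N where N: "\<And>v. N \<le> vlen r par v \<Longrightarrow> wDf k r par f v < \<epsilon> / 2"
    unfolding eventually_at_boundary by blast
  define U where "U = {u. vlen r par u \<le> N}"
  \<comment> \<open>\<open>p\<close> is the expansion of \<open>f\<close> in the functions \<open>pfun r par u\<close>, truncated to the ball \<open>U\<close>.\<close>
  define c where "c u = (if u = r then f r else f u - f (par u))" for u
  define p where "p w = (\<Sum>u\<in>U. c u * pfun r par u w)" for w
  have U: "finite U" "r \<in> U"
    by (simp_all add: U_def finite_vlen_le)
  have "p \<in> Pspace r par"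
    unfolding p_def[abs_def] using Pspace_sum[OF U(1)] .
  moreover have "normk k r par (\<lambda>w. f w - p w) \<le> \<epsilon> / 2"
  proof (rule normk_le)
    fix v assume v: "v \<noteq> r"
    have "p v - p (par v) = (if v \<in> U then f v - f (par v) else 0)"
      unfolding p_def sum_pfun_increment[OF U(1) v] using v by (simp add: c_def)
    then have "f v - p v - (f (par v) - p (par v)) = (if v \<in> U then 0 else f v - f (par v))"
      by (cases "v \<in> U") (simp_all add: algebra_simps)
    then have "wDf k r par (\<lambda>w. f w - p w) v = (if v \<in> U then 0 else wDf k r par f v)"
      by (simp add: wDf_def Df_def)
    moreover have "f r - p r = 0"
      unfolding p_def sum_pfun_root[OF U] by (simp add: c_def)
    ultimately show "cmod (f r - p r) + wDf k r par (\<lambda>w. f w - p w) v \<le> \<epsilon> / 2"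
      using N \<open>0 < \<epsilon>\<close> by (auto simp: U_def less_imp_le)
  qed
  ultimately show ?thesis
    using \<open>0 < \<epsilon>\<close> by (intro bexI[of _ p]) auto
qed

lemma Cauchy_eval:
  assumes s: "\<And>n. s n \<in> L0k k r par"
    and Cauchy: "\<forall>\<epsilon>>0. \<exists>M. \<forall>m\<ge>M. \<forall>n\<ge>M. normk k r par (\<lambda>w. s m w - s n w) < \<epsilon>"
  shows "Cauchy (\<lambda>n. s n v)"
proof (rule metric_CauchyI)
  fix \<epsilon> :: real assume "0 < \<epsilon>"
  define C where "C = 1 + real (vlen r par v)"
  have "0 < C"
    by (simp add: C_def)
  with Cauchy \<open>0 < \<epsilon>\<close> obtain M where M: "\<And>m n. M \<le> m \<Longrightarrow> M \<le> n \<Longrightarrow> normk k r par (\<lambda>w. s m w - s n w) < \<epsilon> / C"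
    by (meson divide_pos_pos)
  have "dist (s m v) (s n v) < \<epsilon>" if "M \<le> m" "M \<le> n" for m n
  proof -
    have "dist (s m v) (s n v) \<le> C * normk k r par (\<lambda>w. s m w - s n w)"
      unfolding dist_norm C_def using s by (intro norm_eval_le L0k_imp_Lk L0k_diff)
    also have "\<dots> < \<epsilon>"
      using M[OF that] \<open>0 < C\<close> by (simp add: field_simps)
    finally show ?thesis .
  qed
  then show "\<exists>M. \<forall>m\<ge>M. \<forall>n\<ge>M. dist (s m v) (s n v) < \<epsilon>"
    by blast
qed

lemma L0k_complete:
  assumes s: "\<And>n. s n \<in> L0k k r par"
    and Cauchy: "\<forall>\<epsilon>>0. \<exists>M. \<forall>m\<ge>M. \<forall>n\<ge>M. normk k r par (\<lambda>w. s m w - s n w) < \<epsilon>"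
  shows "\<exists>g\<in>L0k k r par. (\<lambda>n. normk k r par (\<lambda>w. s n w - g w)) \<longlonglongrightarrow> 0"
proof -
  define g where "g v = lim (\<lambda>n. s n v)" for v
  have lim: "(\<lambda>n. s n v) \<longlonglongrightarrow> g v" for v
    using Cauchy_eval[OF s Cauchy] by (simp add: g_def Cauchy_convergent_iff convergent_LIMSEQ_iff)
  have close: "cmod (s m r - g r) + wDf k r par (\<lambda>w. s m w - g w) v \<le> \<epsilon>"
    if M: "\<forall>m\<ge>M. \<forall>n\<ge>M. normk k r par (\<lambda>w. s m w - s n w) < \<epsilon>" and "M \<le> m" and "v \<noteq> r"
    for \<epsilon> M m v
  proof (rule bound_pointwise_limit[where h = "\<lambda>n w. s m w - s n w"])
    show "(\<lambda>n. s m w - s n w) \<longlonglongrightarrow> s m w - g w" for w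
      by (intro tendsto_intros lim)
    show "\<forall>\<^sub>F n in sequentially. (\<lambda>w. s m w - s n w) \<in> Lk k r par \<and> normk k r par (\<lambda>w. s m w - s n w) \<le> \<epsilon>"
      using M \<open>M \<le> m\<close> s unfolding eventually_sequentially
      by (intro exI[of _ M] allI impI conjI L0k_imp_Lk L0k_diff) (auto intro: less_imp_le)
  qed fact
  have g: "g \<in> L0k k r par"
  proof (rule L0k_closed)
    fix \<epsilon> :: real assume "0 < \<epsilon>"
    then obtain M where M: "\<forall>m\<ge>M. \<forall>n\<ge>M. normk k r par (\<lambda>w. s m w - s n w) < \<epsilon>"
      using Cauchy by blast
    have "wDf k r par (\<lambda>w. s M w - g w) v \<le> \<epsilon>" if "v \<noteq> r" for v
      using close[OF M order_refl that] norm_ge_zero[of "s M r - g r"] by linarith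
    with s show "\<exists>h\<in>L0k k r par. \<forall>v. v \<noteq> r \<longrightarrow> wDf k r par (\<lambda>w. h w - g w) v \<le> \<epsilon>"
      by blast
  qed
  have "(\<lambda>n. normk k r par (\<lambda>w. s n w - g w)) \<longlonglongrightarrow> 0"
  proof (rule LIMSEQ_I)
    fix \<epsilon> :: real assume "0 < \<epsilon>"
    then obtain M where M: "\<forall>m\<ge>M. \<forall>n\<ge>M. normk k r par (\<lambda>w. s m w - s n w) < \<epsilon> / 2"
      using Cauchy half_gt_zero by blast
    have "norm (normk k r par (\<lambda>w. s m w - g w)) < \<epsilon>" if "M \<le> m" for m
    proof -
      have "normk k r par (\<lambda>w. s m w - g w) \<le> \<epsilon> / 2"
        using close[OF M that] by (rule normk_le)
      moreover have "0 \<le> normk k r par (\<lambda>w. s m w - g w)"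
        using s g by (intro normk_nonneg L0k_imp_Lk L0k_diff)
      ultimately show ?thesis
        using \<open>0 < \<epsilon>\<close> by simp
    qed
    then show "\<exists>M. \<forall>m\<ge>M. norm (normk k r par (\<lambda>w. s m w - g w) - 0) < \<epsilon>"
      by auto
  qed
  with g show ?thesis
    by blast
qed

lemma L0k_functional_banach: "functional_banach (L0k k r par) (normk k r par)"
  unfolding functional_banach_def
proof (intro conjI ballI allI impI)
  fix s :: "nat \<Rightarrow> 'v \<Rightarrow> complex"
  assume "\<forall>n. s n \<in> L0k k r par"
    and "\<forall>\<epsilon>>0. \<exists>M. \<forall>m\<ge>M. \<forall>n\<ge>M. normk k r par (\<lambda>w. s m w - s n w) < \<epsilon>"
  then show "\<exists>g\<in>L0k k r par. (\<lambda>n. normk k r par (\<lambda>w. s n w - g w)) \<longlonglongrightarrow> 0"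
    by (intro L0k_complete) auto
next
  fix v
  show "\<exists>C. \<forall>f\<in>L0k k r par. cmod (f v) \<le> C * normk k r par f"
    by (intro exI[of _ "1 + real (vlen r par v)"] ballI norm_eval_le L0k_imp_Lk)
qed (simp_all add: L0k_const L0k_add L0k_scale L0k_imp_Lk normk_nonneg normk_eq_0_iff
       normk_scale normk_triangle)

end

theorem lemma5p4:
  fixes r :: 'v and par :: "'v \<Rightarrow> 'v" and k :: nat
  assumes "rooted_tree r par"
  shows "functional_banach (L0k k r par) (normk k r par)
       \<and> Pspace r par \<subseteq> L0k k r par
       \<and> (\<forall>f\<in>L0k k r par. \<forall>\<epsilon>>0. \<exists>p\<in>Pspace r par. normk k r par (\<lambda>w. f w - p w) < \<epsilon>)
       \<and> (\<forall>v. \<forall>f\<in>L0k k r par. (\<lambda>w. pfun r par v w * f w) \<in> L0k k r par)"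
proof -
  interpret rooted r par
    using assms by unfold_locales
  show ?thesis
    using L0k_functional_banach Pspace_subset_L0k Pspace_dense pfun_mult_in_L0k by blast
qed

end
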